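(* Let $d\ge 1$, let $\mathcal{S}$ be a nonempty finite index set, and let $\hat u_m\in\{-1,1\}^d$ for each $m\in\mathcal{S}$. Then for every coordinate $i\in[d]$, the signs of the outputs in coordinate $i$ of the following aggregation rules all coincide: the mean rule $\mathrm{Agg}_{\mathrm{avg}}$, the coordinate-wise $k$-trimmed-mean rule $\mathrm{Agg}_{\mathrm{trimmed},k}$ for any integer $0\le k<|\mathcal{S}|/2$, the coordinate-wise median rule $\mathrm{Agg}_{\mathrm{median}}$, and the coordinate-wise majority vote rule $\mathrm{Agg}_{\mathrm{maj}}$.
   Context: Let $\hat u_{mi}$ denote the $i$-th coordinate of $\hat u_m$, and $\mathrm{sign}:\mathbb{R}\to\{-1,0,1\}$ the usual sign function (with $\mathrm{sign}(0)=0$). The rules are defined as follows. (A.1) Mean: $\mathrm{Agg}_{\mathrm{avg}}(\{\hat u_m\}_{m\in\mathcal{S}})=\frac{1}{|\mathcal{S}|}\sum_{m\in\mathcal{S}}\hat u_m$. (A.2) Coordinate-wise $k$-trimmed mean ($k\in\mathbb{N}$): for each coordinate $i$, sort $\{\hat u_{mi}: m\in\mathcal{S}\}$ in increasing order, remove the top $k$ and bottom $k$ values, and let $\mathcal{R}_i$ be the set of remaining clients; if $\mathcal{R}_i=\emptyset$ the output in coordinate $i$ is $1$ or $-1$ uniformly at random, otherwise it is $\frac{1}{|\mathcal{R}_i|}\sum_{m\in\mathcal{R}_i}\hat u_{mi}$. (A.3) Coordinate-wise median: for each coordinate $i$, sort $\{\hat u_{mi}: m\in\mathcal{S}\}$ increasingly;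 if $|\mathcal{S}|$ is even, output the average of the elements of ranks $|\mathcal{S}|/2$ and $|\mathcal{S}|/2+1$; otherwise output the element of rank $\lceil|\mathcal{S}|/2\rceil$. (A.4) Coordinate-wise majority vote: in coordinate $i$ output $1$ if there are more $1$'s than $-1$'s among $\{\hat u_{mi}:m\in\mathcal{S}\}$, output $-1$ if there are more $-1$'s than $1$'s, and output $0$ otherwise. *)

theory Defs
  imports "HOL-Analysis.Analysis" "HOL-Library.Multiset"
begin

text \<open>Clients are indexed by a finite set S of type 'm; each client vector is
  in real^'n (d = CARD('n) \<ge> 1).\<close>

definition coord_sorted :: "'m set \<Rightarrow> ('m \<Rightarrow> real^'n) \<Rightarrow> 'n \<Rightarrow> real list" where
  "coord_sorted S u i = sorted_list_of_multiset (image_mset (\<lambda>m. u m $ i) (mset_set S))"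

definition agg_avg :: "'m set \<Rightarrow> ('m \<Rightarrow> real^'n) \<Rightarrow> real^'n" where
  "agg_avg S u = (1 / real (card S)) *\<^sub>R (\<Sum>m\<in>S. u m)"

(* (A.2) coordinate-wise k-trimmed mean; coin i \<in> {-1,1} models the random
   output used when no values remain in coordinate i *)
definition agg_trimmed :: "nat \<Rightarrow> ('n \<Rightarrow> real) \<Rightarrow> 'm set \<Rightarrow> ('m \<Rightarrow> real^'n) \<Rightarrow> real^'n" where
  "agg_trimmed k coin S u = (\<chi> i.
     (let xs = coord_sorted S u i;
          R = take (length xs - 2 * k) (drop k xs)
      in if R = [] then coin i else sum_list R / real (length R)))"

definition agg_median :: "'m set \<Rightarrow> ('m \<Rightarrow> real^'n) \<Rightarrow> real^'n" where
  "agg_median S u = (\<chi> i.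
     (let xs = coord_sorted S u i; n = card S
      in if even n then (xs ! (n div 2 - 1) + xs ! (n div 2)) / 2
         else xs ! (n div 2)))"

definition agg_maj :: "'m set \<Rightarrow> ('m \<Rightarrow> real^'n) \<Rightarrow> real^'n" where
  "agg_maj S u = (\<chi> i.
     (let p = card {m\<in>S. u m $ i = 1}; q = card {m\<in>S. u m $ i = -1}
      in if p > q then 1 else if q > p then -1 else 0))"

end

theory Submission imports Defs begin

text \<open>In each coordinate the sorted client values are q copies of -1 followed by p copies
  of 1, and every rule has the sign of p - q: the mean is (p - q)/(p + q); trimming k values
  at both ends either removes k of each kind or leaves only the majority value; the median
  is a middle entry of the sorted list; and the majority vote is sgn (p - q) by definition.\<close>

definition vote_list :: "nat \<Rightarrow> nat \<Rightarrow> real list" where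
  "vote_list p q = replicate q (-1) @ replicate p 1"

lemma length_vote_list [simp]: "length (vote_list p q) = p + q"
  by (simp add: vote_list_def)

lemma sum_list_vote_list: "sum_list (vote_list p q) = real p - real q"
  by (simp add: vote_list_def sum_list_replicate)

lemma nth_vote_list: "j < p + q \<Longrightarrow> vote_list p q ! j = (if j < q then -1 else 1)"
  by (simp add: vote_list_def nth_append)

lemma sgn_mean_vote_list:
  "sgn (sum_list (vote_list p q) / real (length (vote_list p q))) = sgn (real p - real q)"
proof (cases "p + q = 0")
  case False
  then have "0 < real p + real q"
    by linarith
  then show ?thesis
    by (simp add: sum_list_vote_list)
qed simp

lemma trim_vote_list:
  "take (p + q - 2 * k) (drop k (vote_list p q))
     = vote_list (min (p - k) (p + q - 2 * k)) (min (q - k) (p + q - 2 * k))"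
  by (cases "k \<le> q") (simp_all add: vote_list_def min_def)

lemma sgn_trimmed_margin:
  assumes "2 * k < p + q"
  shows "sgn (real (min (p - k) (p + q - 2 * k)) - real (min (q - k) (p + q - 2 * k)))
           = sgn (real p - real q)"
  using assms by (auto simp: min_def sgn_if)

lemma sgn_median_vote_list:
  assumes "0 < p + q"
  defines "xs \<equiv> vote_list p q" and "n \<equiv> p + q"
  shows "sgn (if even n then (xs ! (n div 2 - 1) + xs ! (n div 2)) / 2 else xs ! (n div 2))
           = sgn (real p - real q)"
proof (cases "even n")
  case True
  then obtain h where "n = 2 * h"
    by (rule evenE)
  moreover have "0 < h"
    using assms(1) calculation unfolding n_def by simp
  ultimately show ?thesis
    using True unfolding xs_def n_def
    by (cases "q < h"; cases "q = h") (simp_all add: nth_vote_list sgn_if)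
next
  case False
  then obtain h where "n = 2 * h + 1"
    by (metis oddE)
  then show ?thesis
    using False unfolding xs_def n_def
    by (cases "q \<le> h") (simp_all add: nth_vote_list sgn_if)
qed

lemma count_image_mset_mset_set:
  "finite S \<Longrightarrow> count (image_mset f (mset_set S)) y = card {x\<in>S. f x = y}"
  by (simp add: count_image_mset vimage_def Int_def conj_commute)

lemma sorted_list_of_multiset_image_two_valued:
  fixes f :: "'a \<Rightarrow> 'b::linorder"
  assumes "finite S" and "a < b" and "\<forall>x\<in>S. f x \<in> {a, b}"
  shows "sorted_list_of_multiset (image_mset f (mset_set S))
           = replicate (card {x\<in>S. f x = a}) a @ replicate (card {x\<in>S. f x = b}) b"
    (is "_ = ?xs")
proof -
  have "count (image_mset f (mset_set S)) y = count (mset ?xs) y" for y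
  proof (cases "y = a \<or> y = b")
    case True
    then show ?thesis
      using assms(2) by (auto simp: count_image_mset_mset_set[OF assms(1)])
  next
    case False
    then have no_y: "{x\<in>S. f x = y} = {}"
      using assms(3) by auto
    show ?thesis
      unfolding count_image_mset_mset_set[OF assms(1)] no_y using False by simp
  qed
  then have "image_mset f (mset_set S) = mset ?xs"
    by (rule multiset_eqI)
  then have "sorted_list_of_multiset (image_mset f (mset_set S)) = sort ?xs"
    by (simp only: sorted_list_of_multiset_mset)
  also have "sort ?xs = ?xs"
    using less_imp_le[OF assms(2)] by (simp add: sorted_sort_id sorted_append)
  finally show ?thesis .
qed

lemma mset_coord_sorted: "mset (coord_sorted S u i) = image_mset (\<lambda>m. u m $ i) (mset_set S)"
  by (simp add: coord_sorted_def)

lemma length_coord_sorted: "finite S \<Longrightarrow> length (coord_sorted S u i) = card S"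
  by (metis mset_coord_sorted size_image_mset size_mset size_mset_set)

lemma coord_sorted_eq_vote_list:
  assumes "finite S" and "\<forall>m\<in>S. u m $ i \<in> {-1, 1}"
  shows "coord_sorted S u i = vote_list (card {m\<in>S. u m $ i = 1}) (card {m\<in>S. u m $ i = -1})"
  using sorted_list_of_multiset_image_two_valued[of S "-1" 1 "\<lambda>m. u m $ i"] assms
  unfolding coord_sorted_def vote_list_def by simp

lemma agg_avg_component:
  assumes "finite S"
  shows "agg_avg S u $ i = sum_list (coord_sorted S u i) / real (length (coord_sorted S u i))"
proof -
  have "sum_list (coord_sorted S u i) = sum_mset (image_mset (\<lambda>m. u m $ i) (mset_set S))"
    by (simp only: sum_mset_sum_list[symmetric] mset_coord_sorted)
  also have "\<dots> = (\<Sum>m\<in>S. u m $ i)"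
    by (rule sum_unfold_sum_mset[symmetric])
  finally show ?thesis
    by (simp add: agg_avg_def length_coord_sorted[OF assms])
qed

lemma sgn_agg_avg_component:
  assumes "finite S" and "coord_sorted S u i = vote_list p q"
  shows "sgn (agg_avg S u $ i) = sgn (real p - real q)"
  using sgn_mean_vote_list by (simp add: agg_avg_component[OF assms(1)] assms(2))

lemma sgn_agg_trimmed_component:
  assumes "coord_sorted S u i = vote_list p q" and "2 * k < p + q"
  shows "sgn (agg_trimmed k coin S u $ i) = sgn (real p - real q)"
proof -
  define p' where "p' = min (p - k) (p + q - 2 * k)"
  define q' where "q' = min (q - k) (p + q - 2 * k)"
  have "0 < length (vote_list p' q')"
    using assms(2) unfolding p'_def q'_def by (simp, linarith)
  then have nonempty: "vote_list p' q' \<noteq> []"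
    by (rule length_greater_0_conv[THEN iffD1])
  have "agg_trimmed k coin S u $ i
      = (if vote_list p' q' = [] then coin i
         else sum_list (vote_list p' q') / real (length (vote_list p' q')))"
    by (simp only: agg_trimmed_def vec_lambda_beta Let_def assms(1) length_vote_list
        trim_vote_list p'_def q'_def)
  also have "\<dots> = sum_list (vote_list p' q') / real (length (vote_list p' q'))"
    using nonempty by (rule if_not_P)
  finally show ?thesis
    using sgn_mean_vote_list[of p' q'] sgn_trimmed_margin[OF assms(2), folded p'_def q'_def]
    by simp
qed

lemma sgn_agg_median_component:
  assumes "finite S" and "S \<noteq> {}" and "coord_sorted S u i = vote_list p q"
  shows "sgn (agg_median S u $ i) = sgn (real p - real q)"
proof -
  have card: "card S = p + q"
    using length_coord_sorted[OF assms(1), of u i] by (simp add: assms(3))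
  moreover have "0 < card S"
    using assms(1,2) by (simp add: card_gt_0_iff)
  ultimately show ?thesis
    using sgn_median_vote_list[of p q]
    by (simp only: agg_median_def vec_lambda_beta Let_def assms(3) card)
qed

lemma agg_maj_component:
  "agg_maj S u $ i = sgn (real (card {m\<in>S. u m $ i = 1}) - real (card {m\<in>S. u m $ i = -1}))"
  by (simp add: agg_maj_def Let_def sgn_if)

theorem theorem1:
  fixes S :: "'m set" and u :: "'m \<Rightarrow> real^'n" and k :: nat and coin :: "'n \<Rightarrow> real"
  assumes "finite S" and "S \<noteq> {}"
    and "\<forall>m\<in>S. \<forall>i. u m $ i \<in> {-1, 1}"
    and "2 * k < card S"
    and "\<forall>i. coin i \<in> {-1, 1}"
  shows "\<forall>i. sgn (agg_avg S u $ i) = sgn (agg_trimmed k coin S u $ i)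
           \<and> sgn (agg_trimmed k coin S u $ i) = sgn (agg_median S u $ i)
           \<and> sgn (agg_median S u $ i) = sgn (agg_maj S u $ i)"
proof
  fix i
  define p where "p = card {m\<in>S. u m $ i = 1}"
  define q where "q = card {m\<in>S. u m $ i = -1}"
  have votes: "coord_sorted S u i = vote_list p q"
    using coord_sorted_eq_vote_list assms(1,3) unfolding p_def q_def by blast
  have "p + q = card S"
    using length_coord_sorted[OF assms(1), of u i] by (simp add: votes)
  \<comment> \<open>As 2k < |S|, some values survive the trimming.\<close>
  then have "sgn (agg_trimmed k coin S u $ i) = sgn (real p - real q)"
    using sgn_agg_trimmed_component[OF votes] assms(4) by simp
  moreover have "sgn (agg_avg S u $ i) = sgn (real p - real q)"
    using sgn_agg_avg_component[OF assms(1) votes] .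
  moreover have "sgn (agg_median S u $ i) = sgn (real p - real q)"
    using sgn_agg_median_component[OF assms(1,2) votes] .
  moreover have "sgn (agg_maj S u $ i) = sgn (real p - real q)"
    by (simp add: agg_maj_component p_def q_def)
  ultimately show "sgn (agg_avg S u $ i) = sgn (agg_trimmed k coin S u $ i)
           \<and> sgn (agg_trimmed k coin S u $ i) = sgn (agg_median S u $ i)
           \<and> sgn (agg_median S u $ i) = sgn (agg_maj S u $ i)"
    by simp
qed

end
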